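(* Assume $\sigma_1(x)=\tfrac12\sigma_1''(0)(x-a_1)(x-b_1)$ and $\sigma_2(x)=\tfrac12\sigma_2''(0)(x-a_2)(x-b_2)$ with $\sigma_1''(0)\ne0$, $\sigma_2''(0)\ne0$ and real zeros satisfying $a_2<a_1<0<b_1<b_2$, and assume $0<q^2\Lambda_q<1$, where $\Lambda_q=q^{-2}\Big[1+\frac{(1-q^{-1})\tau'(0)}{\frac12\sigma_1''(0)}\Big]$. Put $a=a_1$, $b=b_1$ and $$\rho(x)=\frac{(qx/a,\,qx/b;q)_\infty}{(x/a_2,\,x/b_2;q)_\infty}.$$ Then there exist polynomials $P_n$, $n\in\mathbb{N}_0$, with $P_n$ of degree $n$ a solution of the q-EHT with $\lambda=\lambda_n$, and nonzero constants $d_n^2$, such that for all $m,n\in\mathbb{N}_0$ $$\int_a^b P_n(x)P_m(x)\rho(x)\,d_qx=d_n^2\delta_{mn},$$ i.e. orthogonality with respect to $\rho$ supported on $\{q^ka\}_{k\in\mathbb{N}_0}\cup\{q^kb\}_{k\in\mathbb{N}_0}$.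
   Context: Throughout $0<q<1$. For a function $y$ and $\zeta\in\{q,q^{-1}\}$, $D_\zeta y(x)=\frac{y(x)-y(\zeta x)}{(1-\zeta)x}$ for $x\ne0$ and $D_\zeta y(0)=y'(0)$; $[n]_q=\frac{1-q^n}{1-q}$. Let $\sigma_1$ be a real polynomial of degree at most two, $\tau(x)=\tau'(0)x+\tau(0)$ a real polynomial with $\tau'(0)\ne0$, and $\sigma_2(x):=q[\sigma_1(x)+(1-q^{-1})x\tau(x)]$. The q-EHT with parameter $n$ is $\sigma_1(x)D_{q^{-1}}D_qy(x)+\tau(x)D_qy(x)+\lambda_ny(x)=0$, $\lambda_n=-[n]_q\big(\tau'(0)+\tfrac12[n-1]_{q^{-1}}\sigma_1''(0)\big)$. $(\alpha;q)_\infty=\prod_{k\ge0}(1-\alpha q^k)$, $(\alpha_1,\dots,\alpha_r;q)_\infty=\prod_i(\alpha_i;q)_\infty$. For $a<0<b$, $\int_a^b f(x)\,d_qx=(1-q)b\sum_{j\ge0}q^jf(q^jb)+(1-q)(-a)\sum_{j\ge0}q^jf(q^ja)$. *)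

theory Defs
  imports "HOL-Analysis.Analysis" "HOL-Computational_Algebra.Polynomial"
begin

definition qD :: "real \<Rightarrow> (real \<Rightarrow> real) \<Rightarrow> real \<Rightarrow> real" where
  "qD \<zeta> y x = (if x = 0 then deriv y 0 else (y x - y (\<zeta> * x)) / ((1 - \<zeta>) * x))"

definition qnum :: "real \<Rightarrow> int \<Rightarrow> real" where
  "qnum q k = (1 - q powi k) / (1 - q)"

definition qpoch_inf :: "real \<Rightarrow> real \<Rightarrow> real" where
  "qpoch_inf q \<alpha> = (\<Prod>k. 1 - \<alpha> * q ^ k)"

text \<open>Jackson integral over [a,b] with a < 0 < b.\<close>
definition jackson_int :: "real \<Rightarrow> real \<Rightarrow> real \<Rightarrow> (real \<Rightarrow> real) \<Rightarrow> real" where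
  "jackson_int q a b f =
     (1 - q) * b * (\<Sum>j. q ^ j * f (q ^ j * b)) + (1 - q) * (- a) * (\<Sum>j. q ^ j * f (q ^ j * a))"

definition sigma2 :: "real \<Rightarrow> real poly \<Rightarrow> real poly \<Rightarrow> real poly" where
  "sigma2 q \<sigma>1 \<tau> = smult q (\<sigma>1 + [:0, 1 - 1 / q:] * \<tau>)"

definition dd0 :: "real poly \<Rightarrow> real" where
  "dd0 p = poly (pderiv (pderiv p)) 0"

definition qEHT_lambda :: "real \<Rightarrow> real poly \<Rightarrow> real poly \<Rightarrow> nat \<Rightarrow> real" where
  "qEHT_lambda q \<sigma>1 \<tau> n =
     - qnum q (int n) * (poly (pderiv \<tau>) 0 + 1 / 2 * qnum (1 / q) (int n - 1) * dd0 \<sigma>1)"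

definition solves_qEHT :: "real \<Rightarrow> real poly \<Rightarrow> real poly \<Rightarrow> real \<Rightarrow> (real \<Rightarrow> real) \<Rightarrow> bool" where
  "solves_qEHT q \<sigma>1 \<tau> lam y \<longleftrightarrow>
     (\<forall>x. poly \<sigma>1 x * qD (1 / q) (qD q y) x + poly \<tau> x * qD q y x + lam * y x = 0)"

end

theory Submission
  imports Defs
begin

text \<open>
  The operator y \<mapsto> \<sigma>1 D_{1/q} D_q y + \<tau> D_q y preserves polynomials of degree at most k and
  is triangular in the monomial basis with diagonal entries -\<lambda>_k. The hypothesis
  q^2 \<Lambda>_q < 1 makes the \<lambda>_k pairwise distinct, so back substitution yields a monic
  eigenpolynomial P_n of every degree n.

  Orthogonality is a discrete Green identity. The weight \<rho> satisfies the Pearson equation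
  \<rho>(qx) \<sigma>1(qx) = \<rho>(x) \<sigma>2(x) / q on both half-lattices {q^k c}, c \<in> {a, b}, and vanishes at
  c/q. Hence (\<lambda>_n - \<lambda>_m) (1 - 1/q) c times the Jackson sum of P_n P_m \<rho> over {q^k c}
  telescopes to a boundary term at 0 that does not depend on c; the Jackson integral weights
  the two half-sums by b and -a, so they cancel. Positivity of \<rho> on the lattice gives d_n > 0.
\<close>

section \<open>q-Pochhammer symbols\<close>

lemma mult_power_less_1:
  fixes q \<alpha> :: real
  assumes "0 \<le> q" "q \<le> 1" "\<alpha> < 1"
  shows "\<alpha> * q ^ k < 1"
proof (cases "\<alpha> \<le> 0")
  case True
  then have "\<alpha> * q ^ k \<le> 0" using assms by (simp add: mult_nonpos_nonneg)
  then show ?thesis by simp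
next
  case False
  then have "\<alpha> * q ^ k \<le> \<alpha>" using assms by (simp add: mult_left_le power_le_one)
  then show ?thesis using assms by simp
qed

lemma convergent_prod_qpoch:
  assumes "0 < q" "q < (1::real)"
  shows "convergent_prod (\<lambda>k. 1 - \<alpha> * q ^ k)"
proof -
  have "summable (\<lambda>k. norm ((1 - \<alpha> * q ^ k) - 1))"
    using assms by (simp add: abs_mult power_abs summable_geometric)
  then show ?thesis
    by (intro abs_convergent_prod_imp_convergent_prod summable_imp_abs_convergent_prod)
qed

lemma qpoch_inf_rec:
  assumes "0 < q" "q < (1::real)"
  shows "qpoch_inf q \<alpha> = (1 - \<alpha>) * qpoch_inf q (q * \<alpha>)"
proof -
  have "(\<lambda>k. 1 - \<alpha> * q ^ k) has_prod ((\<Prod>k<1. 1 - \<alpha> * q ^ k) * (\<Prod>k. 1 - \<alpha> * q ^ (k + 1)))"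
    by (rule has_prod_ignore_initial_segment'[OF convergent_prod_qpoch[OF assms]])
  moreover have "(\<lambda>k. 1 - \<alpha> * q ^ (k + 1)) = (\<lambda>k. 1 - q * \<alpha> * q ^ k)"
    by (simp add: fun_eq_iff algebra_simps)
  ultimately have "(\<lambda>k. 1 - \<alpha> * q ^ k) has_prod ((1 - \<alpha>) * qpoch_inf q (q * \<alpha>))"
    by (simp add: qpoch_inf_def)
  then show ?thesis
    unfolding qpoch_inf_def by (rule has_prod_unique[symmetric])
qed

lemma qpoch_inf_1:
  assumes "0 < q" "q < (1::real)"
  shows "qpoch_inf q 1 = 0"
  using qpoch_inf_rec[OF assms, of 1] by simp

lemma qpoch_inf_pos:
  assumes q: "0 < q" "q < (1::real)" and "\<alpha> < 1"
  shows "0 < qpoch_inf q \<alpha>"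
proof -
  have pos: "0 < 1 - \<alpha> * q ^ k" for k
    using mult_power_less_1[of q \<alpha> k] assms by simp
  have "(\<lambda>k. 1 - \<alpha> * q ^ k) has_prod qpoch_inf q \<alpha>"
    unfolding qpoch_inf_def by (rule convergent_prod_has_prod[OF convergent_prod_qpoch[OF q]])
  then have "0 \<le> qpoch_inf q \<alpha>"
    using pos has_prod_nonneg less_imp_le by blast
  moreover have "qpoch_inf q \<alpha> \<noteq> 0"
    unfolding qpoch_inf_def using prodinf_nonzero[OF convergent_prod_qpoch[OF q]] pos
    by (metis less_irrefl)
  ultimately show ?thesis by simp
qed

lemma qpoch_inf_tendsto_1:
  assumes q: "0 < q" "q < (1::real)" and "\<alpha> < 1"
  shows "(\<lambda>N. qpoch_inf q (\<alpha> * q ^ N)) \<longlonglongrightarrow> 1"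
proof -
  define f where "f = (\<lambda>k. 1 - \<alpha> * q ^ k)"
  have conv: "convergent_prod f"
    unfolding f_def by (rule convergent_prod_qpoch[OF q])
  have pos: "0 < prodinf f"
    using qpoch_inf_pos[OF assms] by (simp add: f_def qpoch_inf_def)
  have nz: "f k \<noteq> 0" for k
    using has_prod_nonzero[OF convergent_prod_has_prod[OF conv]] pos by simp
  have tail: "qpoch_inf q (\<alpha> * q ^ N) = prodinf f / (\<Prod>k<N. f k)" for N
  proof -
    have "qpoch_inf q (\<alpha> * q ^ N) = (\<Prod>k. f (k + N))"
      by (simp add: qpoch_inf_def f_def power_add algebra_simps)
    then show ?thesis
      using prodinf_divide_initial_segment[OF conv nz] by simp
  qed
  have "(\<lambda>N. \<Prod>k<N. f k) \<longlonglongrightarrow> prodinf f"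
    by (rule has_prod_imp_tendsto'[OF convergent_prod_has_prod[OF conv]])
  then have "(\<lambda>N. prodinf f / (\<Prod>k<N. f k)) \<longlonglongrightarrow> prodinf f / prodinf f"
    using pos by (intro tendsto_divide tendsto_const) auto
  then show ?thesis using pos by (simp add: tail)
qed

section \<open>q-derivatives of polynomials\<close>

text \<open>The q-number [n]_z as a geometric sum, which unlike qnum involves no division.\<close>
definition qnat :: "real \<Rightarrow> nat \<Rightarrow> real" where
  "qnat z n = (\<Sum>i<n. z ^ i)"

lemma qnum_of_nat: "z \<noteq> 1 \<Longrightarrow> qnum z (int n) = qnat z n"
  by (simp add: qnum_def qnat_def sum_gp_strict)

lemma qnat_0 [simp]: "qnat z 0 = 0"
  by (simp add: qnat_def)

lemma qnat_1 [simp]: "qnat z (Suc 0) = 1"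
  by (simp add: qnat_def)

lemma qnat_Suc: "qnat z (Suc n) = 1 + z * qnat z n"
  unfolding qnat_def sum.lessThan_Suc_shift by (simp add: sum_distrib_left)

lemma qnat_nonneg: "0 \<le> z \<Longrightarrow> 0 \<le> qnat z n"
  by (simp add: qnat_def sum_nonneg)

lemma strict_mono_qnat: "0 < z \<Longrightarrow> strict_mono (qnat z)"
  by (simp add: strict_mono_Suc_iff qnat_def)

text \<open>D_z x^(j+1) = [j+1]_z x^j.\<close>
definition pqderiv :: "real \<Rightarrow> real poly \<Rightarrow> real poly" where
  "pqderiv z p = Abs_poly (\<lambda>j. coeff p (Suc j) * qnat z (Suc j))"

lemma coeff_pqderiv: "coeff (pqderiv z p) j = coeff p (Suc j) * qnat z (Suc j)"
proof -
  have "coeff (Abs_poly (\<lambda>j. coeff p (Suc j) * qnat z (Suc j))) = (\<lambda>j. coeff p (Suc j) * qnat z (Suc j))"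
    by (rule coeff_Abs_poly[where n="degree p"]) (simp add: coeff_eq_0)
  then show ?thesis by (simp add: pqderiv_def)
qed

lemma pqderiv_0 [simp]: "pqderiv z 0 = 0"
  by (simp add: poly_eq_iff coeff_pqderiv)

lemma pqderiv_add: "pqderiv z (p + r) = pqderiv z p + pqderiv z r"
  by (simp add: poly_eq_iff coeff_pqderiv algebra_simps)

lemma pqderiv_pCons: "pqderiv z (pCons c p) = p + smult z (pCons 0 (pqderiv z p))"
  by (auto simp add: poly_eq_iff coeff_pqderiv coeff_pCons qnat_Suc algebra_simps split: nat.split)

lemma poly_pqderiv: "(1 - z) * x * poly (pqderiv z p) x = poly p x - poly p (z * x)"
proof (induction p)
  case 0
  show ?case by simp
next
  case (pCons c p)
  have "(1 - z) * x * poly (pqderiv z (pCons c p)) x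
        = (1 - z) * x * poly p x + z * x * ((1 - z) * x * poly (pqderiv z p) x)"
    by (simp add: pqderiv_pCons algebra_simps)
  also have "\<dots> = (1 - z) * x * poly p x + z * x * (poly p x - poly p (z * x))"
    by (simp only: pCons.IH)
  finally show ?case by (simp add: algebra_simps)
qed

lemma qD_poly: "z \<noteq> 1 \<Longrightarrow> qD z (poly p) = poly (pqderiv z p)"
proof
  fix x assume z: "z \<noteq> 1"
  show "qD z (poly p) x = poly (pqderiv z p) x"
  proof (cases "x = 0")
    case True
    have "deriv (poly p) 0 = poly (pderiv p) 0"
      by (rule DERIV_imp_deriv[OF poly_DERIV])
    then show ?thesis
      using True by (simp add: qD_def poly_0_coeff_0 coeff_pderiv coeff_pqderiv)
  next
    case False
    then show ?thesis
      using z poly_pqderiv[of z x p] by (simp add: qD_def field_simps)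
  qed
qed

section \<open>Polynomial solutions of the q-EHT\<close>

definition qEHT_op :: "real \<Rightarrow> real poly \<Rightarrow> real poly \<Rightarrow> real poly \<Rightarrow> real poly" where
  "qEHT_op q \<sigma> \<tau> p = \<sigma> * pqderiv (1 / q) (pqderiv q p) + \<tau> * pqderiv q p"

lemma qEHT_op_add: "qEHT_op q \<sigma> \<tau> (p + r) = qEHT_op q \<sigma> \<tau> p + qEHT_op q \<sigma> \<tau> r"
  by (simp add: qEHT_op_def pqderiv_add algebra_simps)

lemma solves_qEHT_poly_iff:
  assumes "q \<noteq> 1"
  shows "solves_qEHT q \<sigma> \<tau> lam (poly p) \<longleftrightarrow> qEHT_op q \<sigma> \<tau> p + smult lam p = 0"
proof -
  have "1 / q \<noteq> 1" using assms by simp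
  then show ?thesis
    using assms by (simp add: solves_qEHT_def qD_poly qEHT_op_def flip: poly_all_0_iff_0)
qed

lemma coeff_qEHT_op:
  "coeff (qEHT_op q [:s0, s1, s2:] [:t0, t1:] p) i =
     s0 * coeff p (i + 2) * qnat q (i + 2) * qnat (1 / q) (i + 1)
   + s1 * (if i = 0 then 0 else coeff p (i + 1) * qnat q (i + 1) * qnat (1 / q) i)
   + s2 * (if i < 2 then 0 else coeff p i * qnat q i * qnat (1 / q) (i - 1))
   + t0 * coeff p (i + 1) * qnat q (i + 1)
   + t1 * (if i = 0 then 0 else coeff p i * qnat q i)"
proof (cases i)
  case 0
  then show ?thesis by (simp add: qEHT_op_def mult_pCons_left coeff_pqderiv numeral_2_eq_2)
next
  case (Suc j)
  then show ?thesis
    by (cases j) (simp_all add: qEHT_op_def mult_pCons_left coeff_pqderiv numeral_2_eq_2 algebra_simps)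
qed

lemma degree_le_2_eq: "degree p \<le> 2 \<Longrightarrow> p = [:coeff p 0, coeff p 1, coeff p 2:]"
  by (rule poly_eqI) (auto simp: coeff_pCons coeff_eq_0 numeral_2_eq_2 split: nat.split)

lemma degree_le_1_eq: "degree p \<le> 1 \<Longrightarrow> p = [:coeff p 0, coeff p 1:]"
  by (rule poly_eqI) (auto simp: coeff_pCons coeff_eq_0 split: nat.split)

lemma dd0_eq_coeff: "dd0 p = 2 * coeff p 2"
  by (simp add: dd0_def poly_0_coeff_0 coeff_pderiv numeral_2_eq_2)

lemma poly_pderiv_0: "poly (pderiv p) 0 = coeff p 1"
  by (simp add: poly_0_coeff_0 coeff_pderiv)

lemma qEHT_lambda_eq:
  assumes "q \<noteq> 1"
  shows "qEHT_lambda q \<sigma> \<tau> k = - qnat q k * (coeff \<tau> 1 + qnat (1 / q) (k - 1) * coeff \<sigma> 2)"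
proof (cases k)
  case 0
  then show ?thesis by (simp add: qEHT_lambda_def qnum_def)
next
  case (Suc j)
  have "1 / q \<noteq> 1" using assms by simp
  then have "qnum (1 / q) (int k - 1) = qnat (1 / q) (k - 1)"
    using qnum_of_nat[of "1 / q" j] by (simp add: Suc)
  then show ?thesis
    using assms by (simp add: qEHT_lambda_def qnum_of_nat dd0_eq_coeff poly_pderiv_0)
qed

lemma qEHT_lambda_inj:
  assumes q: "0 < q" "q \<noteq> 1" and pos: "0 < poly (pderiv \<tau>) 0 / dd0 \<sigma>"
  shows "inj (qEHT_lambda q \<sigma> \<tau>)"
proof -
  define s where "s = coeff \<sigma> 2"
  define t where "t = coeff \<tau> 1 / s"
  have s: "s \<noteq> 0" and t: "0 < t"
    using pos by (auto simp: s_def t_def dd0_eq_coeff poly_pderiv_0 zero_less_divide_iff)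
  define g where "g k = qnat q k * (t + qnat (1 / q) (k - 1))" for k
  have lambda: "qEHT_lambda q \<sigma> \<tau> = (\<lambda>k. - s * g k)"
    using s q by (auto simp: fun_eq_iff qEHT_lambda_eq g_def t_def s_def field_simps)
  have "strict_mono g"
  proof (rule strict_monoI)
    fix k n :: nat assume "k < n"
    have "0 \<le> qnat q k" using q by (simp add: qnat_nonneg)
    moreover have "qnat (1 / q) (k - 1) \<le> qnat (1 / q) (n - 1)"
      using \<open>k < n\<close> strict_mono_qnat[of "1 / q"] q by (simp add: strict_mono_less_eq)
    ultimately have "g k \<le> qnat q k * (t + qnat (1 / q) (n - 1))"
      unfolding g_def by (simp add: mult_left_mono)
    also have "\<dots> < g n"
    proof -
      have "0 < t + qnat (1 / q) (n - 1)"
        using t q by (simp add: add_pos_nonneg qnat_nonneg)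
      then show ?thesis
        unfolding g_def using \<open>k < n\<close> strict_mono_qnat[OF q(1)]
        by (simp add: strict_mono_def)
    qed
    finally show "g k < g n" .
  qed
  then show ?thesis
    using s by (auto simp: lambda inj_def dest: strict_mono_eq)
qed

lemma qLambda_less_1_imp_pos:
  fixes q t s :: real
  assumes q: "0 < q" "q < 1"
    and "q\<^sup>2 * (q powi (-2) * (1 + (1 - 1 / q) * t / (1 / 2 * s))) < 1"
  shows "0 < t / s"
proof -
  have cancel: "q\<^sup>2 * (q powi (-2) * X) = X" for X
    using q by (simp add: power_int_minus)
  have "(1 - 1 / q) * (t / (1 / 2 * s)) < 0"
    using assms(3) unfolding cancel by simp
  moreover have "1 - 1 / q < 0" using q by simp
  ultimately have "0 < t / (1 / 2 * s)"
    by (auto simp only: mult_less_0_iff)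
  then show ?thesis
    by (simp add: zero_less_divide_iff)
qed

lemma qEHT_op_triangular:
  assumes "q \<noteq> 1" "degree \<sigma> \<le> 2" "degree \<tau> \<le> 1" "degree p \<le> k"
  shows "degree (qEHT_op q \<sigma> \<tau> p) \<le> k"
    and "coeff (qEHT_op q \<sigma> \<tau> p) k = - qEHT_lambda q \<sigma> \<tau> k * coeff p k"
proof -
  have \<sigma>: "\<sigma> = [:coeff \<sigma> 0, coeff \<sigma> 1, coeff \<sigma> 2:]" and \<tau>: "\<tau> = [:coeff \<tau> 0, coeff \<tau> 1:]"
    using assms degree_le_2_eq degree_le_1_eq by blast+
  have p: "coeff p i = 0" if "k < i" for i
    using assms(4) that by (simp add: coeff_eq_0)
  show "degree (qEHT_op q \<sigma> \<tau> p) \<le> k"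
    by (rule degree_le) (subst \<sigma>, subst \<tau>, simp add: coeff_qEHT_op p)
  show "coeff (qEHT_op q \<sigma> \<tau> p) k = - qEHT_lambda q \<sigma> \<tau> k * coeff p k"
  proof -
    consider "k = 0" | "k = 1" | "2 \<le> k" by linarith
    then show ?thesis
      by cases (subst \<sigma>, subst \<tau>, simp add: coeff_qEHT_op p qEHT_lambda_eq[OF assms(1)] algebra_simps)+
  qed
qed

lemma triangular_poly_map_solvable:
  fixes M :: "'a::field poly \<Rightarrow> 'a poly" and d :: "nat \<Rightarrow> 'a"
  assumes add: "\<And>p r. M (p + r) = M p + M r"
    and degree_monom: "\<And>c j. degree (M (monom c j)) \<le> j"
    and coeff_monom: "\<And>c j. coeff (M (monom c j)) j = d j * c"
    and d: "\<And>j. j < k \<Longrightarrow> d j \<noteq> 0"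
    and r: "\<And>i. k \<le> i \<Longrightarrow> coeff r i = 0"
  shows "\<exists>p. (\<forall>i\<ge>k. coeff p i = 0) \<and> M p = r"
  using d r
proof (induction k arbitrary: r)
  case 0
  have "M 0 = 0" using add[of 0 0] add_cancel_right_right by metis
  moreover have "r = 0" using "0.prems" by (simp add: poly_eq_iff)
  ultimately show ?case by (intro exI[of _ 0]) simp
next
  case (Suc k)
  define c where "c = coeff r k / d k"
  define r' where "r' = r - M (monom c k)"
  have "coeff r' i = 0" if "k \<le> i" for i
  proof (cases "i = k")
    case True
    then show ?thesis using Suc.prems(1)[of k] by (simp add: r'_def c_def coeff_monom)
  next
    case False
    then have "k < i" using that by simp
    then show ?thesis
      using Suc.prems(2)[of i] degree_monom[of c k] by (simp add: r'_def coeff_eq_0)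
  qed
  then obtain p where p: "\<forall>i\<ge>k. coeff p i = 0" "M p = r'"
    using Suc.IH[of r'] Suc.prems(1) by auto
  show ?case
  proof (intro exI conjI)
    show "\<forall>i\<ge>Suc k. coeff (p + monom c k) i = 0" using p(1) by simp
    show "M (p + monom c k) = r" using p(2) by (simp add: add r'_def)
  qed
qed

lemma qEHT_polynomial_solution:
  assumes q: "q \<noteq> 1" and deg: "degree \<sigma> \<le> 2" "degree \<tau> \<le> 1"
    and distinct: "\<And>j. j < n \<Longrightarrow> qEHT_lambda q \<sigma> \<tau> j \<noteq> qEHT_lambda q \<sigma> \<tau> n"
  shows "\<exists>P. degree P = n \<and> lead_coeff P = 1 \<and> solves_qEHT q \<sigma> \<tau> (qEHT_lambda q \<sigma> \<tau> n) (poly P)"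
proof -
  let ?lam = "qEHT_lambda q \<sigma> \<tau>"
  define M where "M p = qEHT_op q \<sigma> \<tau> p + smult (?lam n) p" for p
  have add: "M (p + r) = M p + M r" for p r
    by (simp add: M_def qEHT_op_add smult_add_right)
  have degree_monom: "degree (M (monom c j)) \<le> j" for c j
    using qEHT_op_triangular(1)[OF q deg, of "monom c j" j]
    by (simp add: M_def degree_add_le degree_monom_le)
  have coeff_monom: "coeff (M (monom c j)) j = (?lam n - ?lam j) * c" for c j
    using qEHT_op_triangular(2)[OF q deg, of "monom c j" j]
    by (simp add: M_def degree_monom_le algebra_simps)
  have "coeff (- M (monom 1 n)) i = 0" if "n \<le> i" for i
    using that degree_monom[of 1 n] coeff_monom[of 1 n]
    by (cases "i = n") (simp_all add: coeff_eq_0)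
  moreover have "?lam n - ?lam j \<noteq> 0" if "j < n" for j
    using distinct[OF that] by simp
  ultimately obtain p where p: "\<forall>i\<ge>n. coeff p i = 0" "M p = - M (monom 1 n)"
    using triangular_poly_map_solvable[OF add degree_monom coeff_monom] by blast
  define P where "P = monom 1 n + p"
  have "degree P = n"
  proof (rule antisym)
    show "degree P \<le> n" using p(1) by (intro degree_le) (simp add: P_def)
    show "n \<le> degree P" using p(1) by (intro le_degree) (simp add: P_def)
  qed
  moreover have "lead_coeff P = 1"
    using p(1) \<open>degree P = n\<close> by (simp add: P_def)
  moreover have "qEHT_op q \<sigma> \<tau> P + smult (?lam n) P = 0"
    using p(2) add[of "monom 1 n" p] by (simp add: P_def M_def [symmetric])
  ultimately show ?thesis
    using solves_qEHT_poly_iff[OF q] by blast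
qed

section \<open>Orthogonality\<close>

definition qwronskian :: "real \<Rightarrow> (real \<Rightarrow> real) \<Rightarrow> (real \<Rightarrow> real) \<Rightarrow> real \<Rightarrow> real" where
  "qwronskian q y1 y2 x = y1 x * qD q y2 x - y2 x * qD q y1 x"

lemma qEHT_first_order_form:
  assumes q: "q \<noteq> 0" "q \<noteq> 1" and x: "x \<noteq> 0" and y: "solves_qEHT q \<sigma> \<tau> lam y"
  shows "poly (sigma2 q \<sigma> \<tau>) x / q * qD q y x - poly \<sigma> x * qD q y (x / q)
         = - lam * ((1 - 1 / q) * x) * y x"
proof -
  let ?g = "qD q y"
  have \<sigma>2: "poly (sigma2 q \<sigma> \<tau>) x / q = poly \<sigma> x + (1 - 1 / q) * x * poly \<tau> x"
    using q by (simp add: sigma2_def)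
  have D2: "(1 - 1 / q) * x * qD (1 / q) ?g x = ?g x - ?g (x / q)"
    using q x by (simp add: qD_def)
  have "poly (sigma2 q \<sigma> \<tau>) x / q * ?g x - poly \<sigma> x * ?g (x / q)
        = poly \<sigma> x * (?g x - ?g (x / q)) + (1 - 1 / q) * x * poly \<tau> x * ?g x"
    by (simp add: \<sigma>2 algebra_simps)
  also have "\<dots> = (1 - 1 / q) * x * (poly \<sigma> x * qD (1 / q) ?g x + poly \<tau> x * ?g x)"
    by (simp flip: D2 add: algebra_simps)
  also have "\<dots> = - lam * ((1 - 1 / q) * x) * y x"
  proof -
    have "poly \<sigma> x * qD (1 / q) ?g x + poly \<tau> x * ?g x = - lam * y x"
      using y by (simp add: solves_qEHT_def eq_neg_iff_add_eq_0)
    then show ?thesis by simp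
  qed
  finally show ?thesis .
qed

lemma qwronskian_shift:
  assumes q: "q \<noteq> 0" "q \<noteq> 1" and x: "x \<noteq> 0"
  shows "y1 x * qD q y2 (x / q) - y2 x * qD q y1 (x / q) = qwronskian q y1 y2 (x / q)"
proof -
  have shift: "y x = y (x / q) - (1 - q) * (x / q) * qD q y (x / q)" for y :: "real \<Rightarrow> real"
    using q x by (simp add: qD_def)
  show ?thesis
    by (simp only: shift[of y1] shift[of y2] qwronskian_def) (simp add: algebra_simps)
qed

lemma q_green_identity:
  assumes q: "q \<noteq> 0" "q \<noteq> 1" and x: "x \<noteq> 0"
    and pearson: "\<rho> x * poly \<sigma> x = \<rho> (x / q) * poly (sigma2 q \<sigma> \<tau>) (x / q) / q"
    and y1: "solves_qEHT q \<sigma> \<tau> lam1 y1" and y2: "solves_qEHT q \<sigma> \<tau> lam2 y2"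
  shows "(lam1 - lam2) * ((1 - 1 / q) * x) * (y1 x * y2 x * \<rho> x)
         = \<rho> x * poly (sigma2 q \<sigma> \<tau>) x / q * qwronskian q y1 y2 x
           - \<rho> (x / q) * poly (sigma2 q \<sigma> \<tau>) (x / q) / q * qwronskian q y1 y2 (x / q)"
proof -
  let ?s2 = "poly (sigma2 q \<sigma> \<tau>) x / q"
  have "(lam1 - lam2) * ((1 - 1 / q) * x) * (y1 x * y2 x * \<rho> x)
        = \<rho> x * (y1 x * (?s2 * qD q y2 x - poly \<sigma> x * qD q y2 (x / q))
                 - y2 x * (?s2 * qD q y1 x - poly \<sigma> x * qD q y1 (x / q)))"
    by (simp only: qEHT_first_order_form[OF q x y1] qEHT_first_order_form[OF q x y2])
       (use q in \<open>simp add: field_simps\<close>)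
  also have "\<dots> = \<rho> x * ?s2 * qwronskian q y1 y2 x
                 - \<rho> x * poly \<sigma> x * (y1 x * qD q y2 (x / q) - y2 x * qD q y1 (x / q))"
    by (simp add: qwronskian_def algebra_simps)
  finally show ?thesis
    by (simp only: qwronskian_shift[OF q x] pearson times_divide_eq_right)
qed

lemma qEHT_grid_sum:
  fixes \<rho> y1 y2 :: "real \<Rightarrow> real"
  assumes q: "0 < q" "q < 1" and c: "c \<noteq> 0"
    and y1: "solves_qEHT q \<sigma> \<tau> lam1 y1" and y2: "solves_qEHT q \<sigma> \<tau> lam2 y2"
    and lam: "lam1 \<noteq> lam2"
    and cont: "isCont y1 0" "isCont y2 0" "isCont (qD q y1) 0" "isCont (qD q y2) 0"
    and pearson: "\<And>j. \<rho> (q ^ j * c) * poly \<sigma> (q ^ j * c)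
                       = \<rho> (q ^ j * c / q) * poly (sigma2 q \<sigma> \<tau>) (q ^ j * c / q) / q"
    and zero: "\<rho> (c / q) = 0"
    and lim: "(\<lambda>j. \<rho> (q ^ j * c)) \<longlonglongrightarrow> 1"
  shows "(\<lambda>j. q ^ j * (y1 (q ^ j * c) * y2 (q ^ j * c) * \<rho> (q ^ j * c))) sums
           (poly (sigma2 q \<sigma> \<tau>) 0 / q * qwronskian q y1 y2 0 / ((lam1 - lam2) * (1 - 1 / q) * c))"
proof -
  define \<Phi> where "\<Phi> x = \<rho> x * poly (sigma2 q \<sigma> \<tau>) x / q * qwronskian q y1 y2 x" for x
  define K where "K = (lam1 - lam2) * (1 - 1 / q) * c"
  have K: "K \<noteq> 0" using q c lam by (simp add: K_def)
  have step: "q ^ j * (y1 (q ^ j * c) * y2 (q ^ j * c) * \<rho> (q ^ j * c)) * K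
              = \<Phi> (q ^ Suc j * c / q) - \<Phi> (q ^ j * c / q)" for j
  proof -
    have "q ^ Suc j * c / q = q ^ j * c" using q by simp
    moreover have "q ^ j * c \<noteq> 0" using q c by simp
    ultimately show ?thesis
      using q_green_identity[of q "q ^ j * c", OF _ _ _ pearson y1 y2] q
      by (simp add: \<Phi>_def K_def algebra_simps)
  qed
  have grid: "(\<lambda>j. q ^ j * c) \<longlonglongrightarrow> 0"
    using q by (intro tendsto_mult_left_zero LIMSEQ_power_zero) auto
  have "isCont (qwronskian q y1 y2) 0"
    unfolding qwronskian_def using cont by (intro continuous_intros)
  then have "(\<lambda>j. \<Phi> (q ^ j * c)) \<longlonglongrightarrow> 1 * poly (sigma2 q \<sigma> \<tau>) 0 / q * qwronskian q y1 y2 0"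
    unfolding \<Phi>_def
    by (intro tendsto_intros lim isCont_tendsto_compose[OF _ grid]) (use q in \<open>auto intro: poly_isCont\<close>)
  then have "(\<lambda>j. \<Phi> (q ^ Suc j * c / q)) \<longlonglongrightarrow> poly (sigma2 q \<sigma> \<tau>) 0 / q * qwronskian q y1 y2 0"
    using q by simp
  then have "(\<lambda>j. \<Phi> (q ^ j * c / q)) \<longlonglongrightarrow> poly (sigma2 q \<sigma> \<tau>) 0 / q * qwronskian q y1 y2 0"
    by (rule LIMSEQ_imp_Suc)
  then have "(\<lambda>j. \<Phi> (q ^ Suc j * c / q) - \<Phi> (q ^ j * c / q)) sums
               (poly (sigma2 q \<sigma> \<tau>) 0 / q * qwronskian q y1 y2 0 - \<Phi> (c / q))"
    using telescope_sums by fastforce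
  then have "(\<lambda>j. q ^ j * (y1 (q ^ j * c) * y2 (q ^ j * c) * \<rho> (q ^ j * c)) * K / K) sums
               (poly (sigma2 q \<sigma> \<tau>) 0 / q * qwronskian q y1 y2 0 / K)"
    by (intro sums_divide) (simp add: step \<Phi>_def zero)
  then have "(\<lambda>j. q ^ j * (y1 (q ^ j * c) * y2 (q ^ j * c) * \<rho> (q ^ j * c))) sums
               (poly (sigma2 q \<sigma> \<tau>) 0 / q * qwronskian q y1 y2 0 / K)"
    by (simp only: nonzero_mult_div_cancel_right[OF K])
  then show ?thesis
    by (simp only: K_def)
qed

lemma jackson_int_qEHT_orthogonal:
  fixes \<rho> y1 y2 :: "real \<Rightarrow> real"
  assumes q: "0 < q" "q < 1" and ab: "a < 0" "0 < b"
    and y1: "solves_qEHT q \<sigma> \<tau> lam1 y1" and y2: "solves_qEHT q \<sigma> \<tau> lam2 y2"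
    and lam: "lam1 \<noteq> lam2"
    and cont: "isCont y1 0" "isCont y2 0" "isCont (qD q y1) 0" "isCont (qD q y2) 0"
    and pearson: "\<And>c j. c \<in> {a, b} \<Longrightarrow> \<rho> (q ^ j * c) * poly \<sigma> (q ^ j * c)
                       = \<rho> (q ^ j * c / q) * poly (sigma2 q \<sigma> \<tau>) (q ^ j * c / q) / q"
    and zero: "\<And>c. c \<in> {a, b} \<Longrightarrow> \<rho> (c / q) = 0"
    and lim: "\<And>c. c \<in> {a, b} \<Longrightarrow> (\<lambda>j. \<rho> (q ^ j * c)) \<longlonglongrightarrow> 1"
  shows "jackson_int q a b (\<lambda>x. y1 x * y2 x * \<rho> x) = 0"
proof -
  define L where "L = poly (sigma2 q \<sigma> \<tau>) 0 / q * qwronskian q y1 y2 0 / ((lam1 - lam2) * (1 - 1 / q))"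
  have "(\<lambda>j. q ^ j * (y1 (q ^ j * c) * y2 (q ^ j * c) * \<rho> (q ^ j * c))) sums (L / c)"
    if "c \<in> {a, b}" for c
    using qEHT_grid_sum[OF q _ y1 y2 lam cont pearson[OF that] zero[OF that] lim[OF that]] that ab
    by (auto simp: L_def ac_simps)
  then have "jackson_int q a b (\<lambda>x. y1 x * y2 x * \<rho> x) = (1 - q) * b * (L / b) + (1 - q) * (- a) * (L / a)"
    unfolding jackson_int_def by (simp add: sums_iff)
  then show ?thesis using ab by simp
qed

lemma poly_nonzero_on_qgrid:
  fixes P :: "real poly"
  assumes q: "0 < q" "q < 1" and P: "P \<noteq> 0" and c: "c \<noteq> 0"
  obtains j where "poly P (q ^ j * c) \<noteq> 0"
proof -
  have "inj (\<lambda>j. q ^ j * c)"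
    using q c by (intro injI) (simp add: power_inject_exp')
  then have "infinite (range (\<lambda>j. q ^ j * c))"
    by (rule range_inj_infinite)
  then have "\<not> range (\<lambda>j. q ^ j * c) \<subseteq> {x. poly P x = 0}"
    using poly_roots_finite[OF P] finite_subset by blast
  then show ?thesis using that by blast
qed

lemma qgrid_sum_square_pos:
  fixes P :: "real poly" and \<rho> :: "real \<Rightarrow> real"
  assumes q: "0 < q" "q < 1" and P: "P \<noteq> 0" and c: "c \<noteq> 0"
    and pos: "\<And>j. 0 < \<rho> (q ^ j * c)" and conv: "convergent (\<lambda>j. \<rho> (q ^ j * c))"
  shows "0 < (\<Sum>j. q ^ j * (poly P (q ^ j * c) * poly P (q ^ j * c) * \<rho> (q ^ j * c)))"
proof -
  define f where "f j = poly P (q ^ j * c) * poly P (q ^ j * c) * \<rho> (q ^ j * c)" for j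
  have "(\<lambda>j. q ^ j * c) \<longlonglongrightarrow> 0"
    using q by (intro tendsto_mult_left_zero LIMSEQ_power_zero) auto
  then have "(\<lambda>j. poly P (q ^ j * c)) \<longlonglongrightarrow> poly P 0"
    by (rule isCont_tendsto_compose[OF poly_isCont])
  moreover obtain L where "(\<lambda>j. \<rho> (q ^ j * c)) \<longlonglongrightarrow> L"
    using conv convergent_def by blast
  ultimately have "f \<longlonglongrightarrow> poly P 0 * poly P 0 * L"
    unfolding f_def by (intro tendsto_mult)
  then obtain K where K: "\<And>j. norm (f j) \<le> K"
    using convergentI convergent_imp_Bseq BseqE by metis
  have "summable (\<lambda>j. q ^ j * f j)"
  proof (rule summable_comparison_test)
    show "summable (\<lambda>j. K * q ^ j)"
      using q by (intro summable_mult summable_geometric) auto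
    show "\<exists>N. \<forall>j\<ge>N. norm (q ^ j * f j) \<le> K * q ^ j"
      using q K by (auto simp: abs_mult mult.commute intro: mult_left_mono)
  qed
  moreover have "0 \<le> q ^ j * f j" for j
    using q pos[of j] by (simp add: f_def)
  moreover obtain i where "poly P (q ^ i * c) \<noteq> 0"
    using poly_nonzero_on_qgrid[OF q P c] .
  then have "0 < poly P (q ^ i * c) * poly P (q ^ i * c)"
    by (metis not_real_square_gt_zero)
  then have "0 < f i"
    unfolding f_def using pos by (rule mult_pos_pos)
  then have "0 < q ^ i * f i"
    using q by simp
  ultimately show ?thesis
    unfolding f_def by (rule suminf_pos2)
qed

lemma jackson_int_square_pos:
  fixes P :: "real poly" and \<rho> :: "real \<Rightarrow> real"
  assumes q: "0 < q" "q < 1" and ab: "a < 0" "0 < b" and P: "P \<noteq> 0"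
    and pos: "\<And>c j. c \<in> {a, b} \<Longrightarrow> 0 < \<rho> (q ^ j * c)"
    and conv: "\<And>c. c \<in> {a, b} \<Longrightarrow> convergent (\<lambda>j. \<rho> (q ^ j * c))"
  shows "0 < jackson_int q a b (\<lambda>x. poly P x * poly P x * \<rho> x)"
  unfolding jackson_int_def
  using qgrid_sum_square_pos[OF q P _ pos conv, of a] qgrid_sum_square_pos[OF q P _ pos conv, of b] q ab
  by (intro add_pos_pos mult_pos_pos) auto

section \<open>The weight function\<close>

definition qEHT_weight :: "real \<Rightarrow> real \<Rightarrow> real \<Rightarrow> real \<Rightarrow> real \<Rightarrow> real \<Rightarrow> real" where
  "qEHT_weight q a b a2 b2 x =
     qpoch_inf q (q * x / a) * qpoch_inf q (q * x / b) / (qpoch_inf q (x / a2) * qpoch_inf q (x / b2))"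

lemma qEHT_weight_pearson:
  fixes q a b a2 b2 A B y :: real
  assumes q: "0 < q" "q < 1" and nz: "a \<noteq> 0" "b \<noteq> 0" "a2 \<noteq> 0" "b2 \<noteq> 0"
    and y: "y \<noteq> a2" "y \<noteq> b2" and AB: "B * a2 * b2 = q * A * a * b"
  shows "qEHT_weight q a b a2 b2 (q * y) * (A * (q * y - a) * (q * y - b))
         = qEHT_weight q a b a2 b2 y * (B * (y - a2) * (y - b2)) / q"
proof -
  define n where "n = qpoch_inf q (q * (q * y) / a) * qpoch_inf q (q * (q * y) / b)"
  define d where "d = qpoch_inf q (q * y / a2) * qpoch_inf q (q * y / b2)"
  define u where "u = (1 - q * y / a) * (1 - q * y / b)"
  define v where "v = (1 - y / a2) * (1 - y / b2)"
  have v: "v \<noteq> 0"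
    using y nz by (simp add: v_def divide_eq_1_iff)
  have w: "qEHT_weight q a b a2 b2 y = u * n / (v * d)"
    unfolding qEHT_weight_def n_def d_def u_def v_def
    by (subst (1 2 3 4) qpoch_inf_rec[OF q]) (simp add: mult_ac)
  have wq: "qEHT_weight q a b a2 b2 (q * y) = n / d"
    by (simp add: qEHT_weight_def n_def d_def)
  have \<sigma>: "A * (q * y - a) * (q * y - b) = A * a * b * u"
    using nz by (simp add: u_def field_simps)
  have \<sigma>2: "B * (y - a2) * (y - b2) = B * a2 * b2 * v"
    using nz by (simp add: v_def field_simps)
  show ?thesis
    unfolding w wq \<sigma> \<sigma>2 AB using q v by (cases "d = 0") (simp_all add: field_simps)
qed

lemma qEHT_weight_grid:
  assumes q: "0 < q" "q < 1" and zeros: "a2 < a" "a < 0" "0 < b" "b < b2" and c: "c \<in> {a, b}"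
  shows "0 < qEHT_weight q a b a2 b2 (q ^ j * c)"
    and "(\<lambda>j. qEHT_weight q a b a2 b2 (q ^ j * c)) \<longlonglongrightarrow> 1"
    and "qEHT_weight q a b a2 b2 (c / q) = 0"
proof -
  have "a < q * b" "q * a < b"
    using mult_pos_pos[OF q(1) zeros(3)] mult_pos_neg[OF q(1) zeros(2)] zeros by linarith+
  then have \<alpha>: "q * c / a < 1" "q * c / b < 1" "c / a2 < 1" "c / b2 < 1"
    using c q zeros by (auto simp: divide_less_eq divide_neg_pos divide_pos_neg)
  have grid: "qEHT_weight q a b a2 b2 (q ^ j * c)
      = qpoch_inf q (q * c / a * q ^ j) * qpoch_inf q (q * c / b * q ^ j)
        / (qpoch_inf q (c / a2 * q ^ j) * qpoch_inf q (c / b2 * q ^ j))" for j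
    by (simp add: qEHT_weight_def mult_ac)
  show "0 < qEHT_weight q a b a2 b2 (q ^ j * c)"
    unfolding grid using q \<alpha>
    by (intro divide_pos_pos mult_pos_pos qpoch_inf_pos mult_power_less_1) auto
  have "(\<lambda>j. qEHT_weight q a b a2 b2 (q ^ j * c)) \<longlonglongrightarrow> 1 * 1 / (1 * 1)"
    unfolding grid by (intro tendsto_intros qpoch_inf_tendsto_1 q \<alpha>) simp
  then show "(\<lambda>j. qEHT_weight q a b a2 b2 (q ^ j * c)) \<longlonglongrightarrow> 1"
    by simp
  show "qEHT_weight q a b a2 b2 (c / q) = 0"
    using c q zeros by (auto simp: qEHT_weight_def qpoch_inf_1)
qed

lemma qEHT_weight_pearson_grid:
  assumes q: "0 < q" "q < 1" and zeros: "a2 < a" "a < 0" "0 < b" "b < b2" and c: "c \<in> {a, b}"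
    and \<sigma>: "\<And>x. poly \<sigma> x = A * (x - a) * (x - b)"
    and \<sigma>2: "\<And>x. poly (sigma2 q \<sigma> \<tau>) x = B * (x - a2) * (x - b2)"
  shows "qEHT_weight q a b a2 b2 (q ^ j * c) * poly \<sigma> (q ^ j * c)
         = qEHT_weight q a b a2 b2 (q ^ j * c / q) * poly (sigma2 q \<sigma> \<tau>) (q ^ j * c / q) / q"
proof (cases j)
  case 0
  then show ?thesis
    using qEHT_weight_grid(3)[OF q zeros c] c by (auto simp: \<sigma>)
next
  case (Suc i)
  define y where "y = q ^ i * c"
  have qi: "0 < q ^ i" "q ^ i \<le> 1" using q by (simp_all add: power_le_one)
  have "a \<le> q ^ i * b" "q ^ i * a \<le> b"
    using mult_pos_pos[OF qi(1) zeros(3)] mult_pos_neg[OF qi(1) zeros(2)] zeros by linarith+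
  then have "a \<le> y \<and> y \<le> b"
    using c zeros qi by (auto simp: y_def mult_left_le_one_le mult_le_cancel_right1)
  then have y: "y \<noteq> a2" "y \<noteq> b2" using zeros by auto
  have "B * a2 * b2 = q * A * a * b"
    using \<sigma>[of 0] \<sigma>2[of 0] by (simp add: sigma2_def)
  then have "qEHT_weight q a b a2 b2 (q * y) * (A * (q * y - a) * (q * y - b))
             = qEHT_weight q a b a2 b2 y * (B * (y - a2) * (y - b2)) / q"
    using zeros by (intro qEHT_weight_pearson[OF q _ _ _ _ y]) auto
  then show ?thesis
    using q by (simp add: Suc y_def \<sigma> \<sigma>2 mult.assoc)
qed

theorem theorem4p2:
  fixes q a1 b1 a2 b2 :: real and \<sigma>1 \<tau> :: "real poly"
  assumes q: "0 < q" "q < 1"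
    and deg_s1: "degree \<sigma>1 \<le> 2"
    and deg_tau: "degree \<tau> \<le> 1" and tau1: "poly (pderiv \<tau>) 0 \<noteq> 0"
    and s1_ne: "dd0 \<sigma>1 \<noteq> 0" and s2_ne: "dd0 (sigma2 q \<sigma>1 \<tau>) \<noteq> 0"
    and s1_fac: "\<forall>x. poly \<sigma>1 x = 1 / 2 * dd0 \<sigma>1 * (x - a1) * (x - b1)"
    and s2_fac: "\<forall>x. poly (sigma2 q \<sigma>1 \<tau>) x = 1 / 2 * dd0 (sigma2 q \<sigma>1 \<tau>) * (x - a2) * (x - b2)"
    and zeros: "a2 < a1" "a1 < 0" "0 < b1" "b1 < b2"
    and Lam: "0 < q\<^sup>2 * (q powi (-2) * (1 + (1 - 1 / q) * poly (pderiv \<tau>) 0 / (1 / 2 * dd0 \<sigma>1)))"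
             "q\<^sup>2 * (q powi (-2) * (1 + (1 - 1 / q) * poly (pderiv \<tau>) 0 / (1 / 2 * dd0 \<sigma>1))) < 1"
  shows "\<exists>(P :: nat \<Rightarrow> real poly) (d2 :: nat \<Rightarrow> real).
           (\<forall>n. degree (P n) = n
                \<and> solves_qEHT q \<sigma>1 \<tau> (qEHT_lambda q \<sigma>1 \<tau> n) (poly (P n))
                \<and> d2 n \<noteq> 0)
         \<and> (\<forall>m n. jackson_int q a1 b1
                 (\<lambda>x. poly (P n) x * poly (P m) x *
                      (qpoch_inf q (q * x / a1) * qpoch_inf q (q * x / b1)
                       / (qpoch_inf q (x / a2) * qpoch_inf q (x / b2))))
               = (if m = n then d2 n else 0))"
proof -
  have q1: "q \<noteq> 1" using q by simp
  have "0 < poly (pderiv \<tau>) 0 / dd0 \<sigma>1"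
    using Lam(2) by (rule qLambda_less_1_imp_pos[OF q])
  then have inj: "inj (qEHT_lambda q \<sigma>1 \<tau>)"
    by (rule qEHT_lambda_inj[OF q(1) q1])
  have "\<forall>n. \<exists>P. degree P = n \<and> lead_coeff P = 1 \<and> solves_qEHT q \<sigma>1 \<tau> (qEHT_lambda q \<sigma>1 \<tau> n) (poly P)"
    using qEHT_polynomial_solution[OF q1 deg_s1 deg_tau] inj by (simp add: inj_eq)
  then obtain P where P: "\<And>n. degree (P n) = n" "\<And>n. lead_coeff (P n) = 1"
    and solves: "\<And>n. solves_qEHT q \<sigma>1 \<tau> (qEHT_lambda q \<sigma>1 \<tau> n) (poly (P n))"
    by metis
  have cont: "isCont (poly (P n)) 0" "isCont (qD q (poly (P n))) 0" for n
    using q1 by (simp_all add: qD_poly)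
  define \<rho> where "\<rho> = qEHT_weight q a1 b1 a2 b2"
  note weight = qEHT_weight_grid[OF q zeros, folded \<rho>_def]
  note pearson = qEHT_weight_pearson_grid[OF q zeros _ s1_fac[rule_format] s2_fac[rule_format], folded \<rho>_def]
  define d2 where "d2 n = jackson_int q a1 b1 (\<lambda>x. poly (P n) x * poly (P n) x * \<rho> x)" for n
  have "0 < d2 n" for n
    unfolding d2_def using P(2)[of n] weight(1,2)
    by (intro jackson_int_square_pos[OF q zeros(2,3)]) (auto intro: convergentI)
  then have "d2 n \<noteq> 0" for n
    by (metis less_irrefl)
  moreover have "jackson_int q a1 b1 (\<lambda>x. poly (P n) x * poly (P m) x * \<rho> x) = 0" if "m \<noteq> n" for m n
    using that inj
    by (intro jackson_int_qEHT_orthogonal[OF q zeros(2,3) solves solves _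
             cont(1)[of n] cont(1)[of m] cont(2)[of n] cont(2)[of m] pearson weight(3,2)])
       (auto simp: inj_eq)
  ultimately show ?thesis
    by (intro exI[of _ P] exI[of _ d2]) (auto simp: P(1) solves d2_def \<rho>_def qEHT_weight_def)
qed

end
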